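(* Let $(X,\mu)$ be a standard probability space with an ergodic measure-preserving $\mathbb{Z}$-action generated by $T$, let $B$ be a separable reflexive Banach space, let $c:\mathbb{Z}\times X\to\mathrm{Isom}(B)$ be a Borel cocycle ($c(n+m,x)=c(n,x)c(m,T^nx)$, $(n,x)\mapsto c(n,x).b$ measurable), and let $s:X\times\mathbb{Z}\times\mathbb{Z}\to B$ satisfy $s_x(m,l)+s_x(l,n)=s_x(m,n)$, $c(k,x).s_{T^kx}(m,n)=s_x(m+k,n+k)$, with $x\mapsto s_x(m,n)$ weakly measurable and $x\mapsto\|s_x(0,n)\|_B$ integrable for all $n$. Let $\rho_x(m,n)=\|s_x(m,n)\|_B$ and $A=\lim_{n\to\infty}\frac1n\int_X\rho_x(0,n)\,d\mu(x)$. Then there exist an integrable function $\varphi$ on $X$ with $\int_X\varphi\,d\mu=A$ and nonnegative measurable functions $r_n$ ($n\ge1$) such that \[ \rho_x(0,n)=\sum_{k=0}^{n-1}\varphi(T^kx)+r_n(x) \] for a.e. $x$ and all $n\ge1$, where $(r_n)$ is subadditive ($r_{n+m}(x)\le r_n(x)+r_m(T^nx)$) with $\lim_{n\to\infty}\frac1n\int_X r_n\,d\mu=0$.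
   Context: Weakly measurable: $x\mapsto\langle\phi,s_x(m,n)\rangle$ measurable for all $\phi\in B^*$. *)

theory Defs
  imports "HOL-Analysis.Analysis" "HOL-Probability.Probability"
begin

definition standard_borel :: "'a measure \<Rightarrow> bool" where
  "standard_borel M \<longleftrightarrow>
     (\<exists>d. Metric_space (space M) d \<and> Metric_space.mcomplete (space M) d \<and>
          separable_space (Metric_space.mtopology (space M) d) \<and>
          sets M = sigma_sets (space M) {U. openin (Metric_space.mtopology (space M) d) U})"

definition standard_prob_space :: "'a measure \<Rightarrow> bool" where
  "standard_prob_space M \<longleftrightarrow> prob_space M \<and> standard_borel M"

text \<open>T generates a measure-preserving Z-action: T is a bimeasurable bijection of the
space preserving the measure.\<close>
definition invertible_mpt :: "'a measure \<Rightarrow> ('a \<Rightarrow> 'a) \<Rightarrow> bool" where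
  "invertible_mpt M T \<longleftrightarrow>
     T \<in> measurable M M \<and> bij_betw T (space M) (space M) \<and>
     inv_into (space M) T \<in> measurable M M \<and>
     (\<forall>A\<in>sets M. emeasure M (T -` A \<inter> space M) = emeasure M A)"

definition ergodic :: "'a measure \<Rightarrow> ('a \<Rightarrow> 'a) \<Rightarrow> bool" where
  "ergodic M T \<longleftrightarrow>
     (\<forall>A\<in>sets M. T -` A \<inter> space M = A \<longrightarrow> measure M A = 0 \<or> measure M A = 1)"

definition Tpow :: "'a measure \<Rightarrow> ('a \<Rightarrow> 'a) \<Rightarrow> int \<Rightarrow> 'a \<Rightarrow> 'a" where
  "Tpow M T n = (if 0 \<le> n then T ^^ nat n else inv_into (space M) T ^^ nat (- n))"

definition separable_banach :: "'b::banach itself \<Rightarrow> bool" where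
  "separable_banach _ \<longleftrightarrow> (\<exists>C::'b set. countable C \<and> closure C = UNIV)"

definition reflexive_banach :: "'b::banach itself \<Rightarrow> bool" where
  "reflexive_banach _ \<longleftrightarrow>
     (\<forall>\<Phi> :: ('b \<Rightarrow>\<^sub>L real) \<Rightarrow>\<^sub>L real. \<exists>b::'b. \<forall>f. blinfun_apply \<Phi> f = blinfun_apply f b)"

definition lin_isometry :: "('b::real_normed_vector \<Rightarrow> 'b) \<Rightarrow> bool" where
  "lin_isometry U \<longleftrightarrow> linear U \<and> (\<forall>b. norm (U b) = norm b) \<and> surj U"

end

theory Submission
  imports Defs
begin

text \<open>
  Put \<rho>_n(x) = \<parallel>s_x(0,n)\<parallel>.  Additivity and isometric equivariance of s make
  d_x(i,j) = \<parallel>s_x(i,j)\<parallel> a family of pseudometrics on \<nat> with d_{Tx}(i,j) = d_x(i+1,j+1), so \<rho>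
  is a subadditive cocycle and a(n) = \<integral>\<rho>_n has a drift A = lim a(n)/n (Fekete).  The averaged
  increments f_N = (1/(N+1)) \<Sum>_{j\<le>N} (\<rho>_{j+1} - \<rho>_j \<circ> T) are dominated by \<rho>_1, have integral
  at least A, and (by a telescoping estimate for pseudometrics) Birkhoff sums at most
  \<rho>_n + O(1/N).  A Komlos-type selection principle, proved via the parallelogram law for a
  weighted quadratic energy, extracts from the (midpoint-closed) classes of functions sharing
  these three properties an almost everywhere convergent sequence with limit \<phi>; dominated convergence gives \<integral>\<phi> \<ge> A, the Birkhoff sums of \<phi> are bounded by \<rho>_n, and
  hence \<integral>\<phi> = A.  The remainder r_n = \<rho>_n - \<Sum>_{k<n} \<phi> \<circ> T^k is then nonnegative, subadditive and
  of sublinear mean.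
\<close>

lemma sum_lessThan_add_split:
  "(\<Sum>j<m + n. g j) = (\<Sum>j<m. g j) + (\<Sum>k<n. g (m + k :: nat) :: 'a :: comm_monoid_add)"
  by (induction n) (simp_all add: add.assoc)

lemma birkhoff_sum_add:
  fixes f :: "'x \<Rightarrow> real"
  shows "(\<Sum>k<n + m. f ((T ^^ k) x)) = (\<Sum>k<n. f ((T ^^ k) x)) + (\<Sum>k<m. f ((T ^^ k) ((T ^^ n) x)))"
proof -
  have "(T ^^ k) ((T ^^ n) x) = (T ^^ (n + k)) x" for k by (simp add: funpow_add add.commute)
  thus ?thesis by (simp add: sum_lessThan_add_split)
qed

lemma subadditive_multiple_bound:
  fixes a :: "nat \<Rightarrow> real"
  assumes sub: "\<And>n m. a (n + m) \<le> a n + a m"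
  shows "a (q * m + r) \<le> real q * a m + a r"
proof (induction q)
  case (Suc q)
  have "a (Suc q * m + r) = a (m + (q * m + r))" by (simp add: algebra_simps)
  also have "\<dots> \<le> a m + a (q * m + r)" by (rule sub)
  also have "\<dots> \<le> a m + (real q * a m + a r)" using Suc by simp
  finally show ?case by (simp add: algebra_simps)
qed simp

lemma fekete_subadditive:
  fixes a :: "nat \<Rightarrow> real"
  assumes sub: "\<And>n m. a (n + m) \<le> a n + a m" and nonneg: "\<And>n. 0 \<le> a n"
  defines "L \<equiv> Inf ((\<lambda>n. a n / real n) ` {1..})"
  shows "(\<lambda>n. a n / real n) \<longlonglongrightarrow> L" and "\<And>n. n \<ge> 1 \<Longrightarrow> L \<le> a n / real n"
proof -
  have bdd: "bdd_below ((\<lambda>n. a n / real n) ` {1..})"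
    by (rule bdd_belowI[of _ 0]) (use nonneg in auto)
  show lower: "\<And>n. n \<ge> 1 \<Longrightarrow> L \<le> a n / real n"
    unfolding L_def by (rule cInf_lower) (use bdd in auto)
  have upper: "a n / real n \<le> a m / real m + (\<Sum>r<m. a r) / real n" if "m \<ge> 1" "n \<ge> 1" for m n
  proof -
    have "a n = a ((n div m) * m + n mod m)" by simp
    also have "\<dots> \<le> real (n div m) * a m + a (n mod m)"
      by (rule subadditive_multiple_bound[OF sub])
    also have "a (n mod m) \<le> (\<Sum>r<m. a r)"
      by (rule member_le_sum) (use that nonneg in auto)
    finally have 1: "a n \<le> real (n div m) * a m + (\<Sum>r<m. a r)" by simp
    have "real (n div m) * real m \<le> real n"
      by (metis div_times_less_eq_dividend of_nat_le_iff of_nat_mult)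
    hence "real (n div m) \<le> real n / real m" using that by (simp add: field_simps)
    hence "real (n div m) * a m \<le> real n / real m * a m"
      using nonneg by (intro mult_right_mono) auto
    hence "a n \<le> real n * (a m / real m) + (\<Sum>r<m. a r)" using 1 by simp
    thus ?thesis using that by (simp add: field_simps)
  qed
  show "(\<lambda>n. a n / real n) \<longlonglongrightarrow> L"
  proof (rule order_tendstoI)
    fix y assume "y < L"
    show "\<forall>\<^sub>F n in sequentially. y < a n / real n"
      using eventually_ge_at_top[of 1] by eventually_elim (use lower \<open>y < L\<close> in force)
  next
    fix y assume "L < y"
    then obtain m where m: "m \<ge> 1" "a m / real m < y"
      using cInf_lessD[of "(\<lambda>n. a n / real n) ` {1..}" y] unfolding L_def by auto
    have "(\<lambda>n. (\<Sum>r<m. a r) / real n) \<longlonglongrightarrow> 0"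
      by (intro tendsto_divide_0[OF tendsto_const] filterlim_at_top_imp_at_infinity
          filterlim_real_sequentially)
    hence "\<forall>\<^sub>F n in sequentially. (\<Sum>r<m. a r) / real n < y - a m / real m"
      using m by (intro order_tendstoD) auto
    thus "\<forall>\<^sub>F n in sequentially. a n / real n < y"
      using eventually_ge_at_top[of 1] by eventually_elim (use upper m in force)
  qed
qed

text \<open>For a pseudometric d on \<nat>, the
  telescoping double sum below, which is the Birkhoff sum of an averaged increment
  along the orbit, is at most P d(0,n) plus an error independent of P.\<close>
lemma pseudometric_telescoping_bound:
  fixes d :: "nat \<Rightarrow> nat \<Rightarrow> real"
  assumes refl: "\<And>a. d a a = 0" and sym: "\<And>a b. d a b = d b a"
    and tri: "\<And>a b c. d a c \<le> d a b + d b c"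
  shows "(\<Sum>k<n. \<Sum>j<P. d k (k + j + 1) - d (k + 1) (k + j + 1))
           \<le> real P * d 0 n + 2 * (\<Sum>j<n. d 0 (j + 1))"
proof -
  define D where "D k = (\<Sum>j<P. d k (k + j + 1))" for k
  have step: "(\<Sum>j<P. d k (k + j + 1) - d (k + 1) (k + j + 1))
                = D k - D (k + 1) + d (k + 1) (k + 1 + P)" for k
  proof -
    define g where "g i = d (k + 1) (k + 1 + i)" for i
    have "(\<Sum>j<Suc P. g j) = g 0 + (\<Sum>j<P. g (Suc j))" by (rule sum.lessThan_Suc_shift)
    moreover have "(\<Sum>j<Suc P. g j) = (\<Sum>j<P. g j) + g P" by simp
    moreover have "g 0 = 0" using refl by (simp add: g_def)
    moreover have "(\<Sum>j<P. g (Suc j)) = D (k + 1)" by (simp add: g_def D_def add.assoc)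
    ultimately have "(\<Sum>j<P. g j) = D (k + 1) - g P" by linarith
    moreover have "(\<Sum>j<P. d (k + 1) (k + j + 1)) = (\<Sum>j<P. g j)"
      by (intro sum.cong) (auto simp: g_def algebra_simps)
    ultimately show ?thesis by (simp add: sum_subtractf D_def g_def)
  qed
  have telescope: "(\<Sum>k<n. \<Sum>j<P. d k (k + j + 1) - d (k + 1) (k + j + 1))
                     = D 0 - D n + (\<Sum>k<n. d (k + 1) (k + 1 + P))"
  proof (induction n)
    case (Suc n)
    show ?case using Suc step[of n] by simp
  qed simp
  have "(\<Sum>k<n. d (k + 1) (k + 1 + P)) \<le> (\<Sum>k<n. d 0 (k + 1)) + (\<Sum>k<n. d 0 (k + 1 + P))"
    unfolding sum.distrib[symmetric]
    by (intro sum_mono) (metis sym tri)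
  moreover have "(\<Sum>j<P. d 0 (n + j + 1) - d 0 n) \<le> D n"
    unfolding D_def by (intro sum_mono) (smt (verit) tri)
  moreover have "(\<Sum>j<P. d 0 (n + j + 1) - d 0 n) = (\<Sum>j<P. d 0 (n + j + 1)) - real P * d 0 n"
    by (simp add: sum_subtractf)
  moreover have "D 0 + (\<Sum>k<n. d 0 (k + 1 + P)) = (\<Sum>j<n. d 0 (j + 1)) + (\<Sum>j<P. d 0 (n + j + 1))"
  proof -
    have "D 0 + (\<Sum>k<n. d 0 (k + 1 + P)) = (\<Sum>j<P + n. d 0 (j + 1))"
      unfolding D_def sum_lessThan_add_split by (simp add: algebra_simps)
    also have "\<dots> = (\<Sum>j<n + P. d 0 (j + 1))" by (simp add: add.commute)
    also have "\<dots> = (\<Sum>j<n. d 0 (j + 1)) + (\<Sum>j<P. d 0 (n + j + 1))"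
      unfolding sum_lessThan_add_split by (simp add: algebra_simps)
    finally show ?thesis .
  qed
  ultimately show ?thesis unfolding telescope by linarith
qed

text \<open>Functions dominated by an integrable G are measured by
  the weighted quadratic energy \<integral> h^2/(G+1), which is finite for them and satisfies the
  parallelogram law; smallness of the energy of a difference controls its L1 norm.\<close>
definition weighted_energy :: "'x measure \<Rightarrow> ('x \<Rightarrow> real) \<Rightarrow> ('x \<Rightarrow> real) \<Rightarrow> real" where
  "weighted_energy M G h = (\<integral>x. (h x)\<^sup>2 / (G x + 1) \<partial>M)"

lemma weighted_energy_integrable:
  fixes G h :: "'x \<Rightarrow> real"
  assumes G: "integrable M G" "\<And>x. x \<in> space M \<Longrightarrow> 0 \<le> G x"
    and h: "h \<in> borel_measurable M" "\<And>x. x \<in> space M \<Longrightarrow> \<bar>h x\<bar> \<le> c * G x"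
  shows "integrable M (\<lambda>x. (h x)\<^sup>2 / (G x + 1))"
proof (rule Bochner_Integration.integrable_bound)
  have [measurable]: "G \<in> borel_measurable M" "h \<in> borel_measurable M" using G(1) h(1) by auto
  show "integrable M (\<lambda>x. c\<^sup>2 * G x)" using G(1) by auto
  show "(\<lambda>x. (h x)\<^sup>2 / (G x + 1)) \<in> borel_measurable M" by measurable
  show "AE x in M. norm ((h x)\<^sup>2 / (G x + 1)) \<le> norm (c\<^sup>2 * G x)"
  proof (rule AE_I2)
    fix x assume x: "x \<in> space M"
    have "(h x)\<^sup>2 = \<bar>h x\<bar>\<^sup>2" by simp
    also have "\<dots> \<le> (c * G x)\<^sup>2" using h(2)[OF x] by (intro power_mono) auto
    also have "\<dots> = c\<^sup>2 * (G x * G x)" by (simp add: power2_eq_square algebra_simps)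
    also have "\<dots> \<le> c\<^sup>2 * (G x * (G x + 1))"
      using G(2)[OF x] by (intro mult_left_mono) (auto simp: distrib_left)
    also have "\<dots> = c\<^sup>2 * G x * (G x + 1)" by (simp add: mult.assoc)
    finally have "(h x)\<^sup>2 / (G x + 1) \<le> c\<^sup>2 * G x"
      using G(2)[OF x] by (simp add: divide_le_eq)
    thus "norm ((h x)\<^sup>2 / (G x + 1)) \<le> norm (c\<^sup>2 * G x)" using G(2)[OF x] by simp
  qed
qed

lemma weighted_energy_nonneg:
  assumes "\<And>x. x \<in> space M \<Longrightarrow> 0 \<le> G x"
  shows "0 \<le> weighted_energy M G h"
  unfolding weighted_energy_def
  by (rule integral_nonneg_AE) (use assms in \<open>auto intro!: AE_I2 divide_nonneg_pos\<close>)

lemma weighted_energy_le: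
  assumes G: "integrable M G" "\<And>x. x \<in> space M \<Longrightarrow> 0 \<le> G x"
    and h: "h \<in> borel_measurable M" "\<And>x. x \<in> space M \<Longrightarrow> \<bar>h x\<bar> \<le> G x"
  shows "weighted_energy M G h \<le> integral\<^sup>L M G"
proof -
  have "\<And>x. x \<in> space M \<Longrightarrow> \<bar>h x\<bar> \<le> 1 * G x" using h(2) by force
  note energy_integrable = weighted_energy_integrable[OF G h(1) this]
  show ?thesis unfolding weighted_energy_def
  proof (rule integral_mono[OF energy_integrable G(1)])
    fix x assume x: "x \<in> space M"
    have "(h x)\<^sup>2 = \<bar>h x\<bar>\<^sup>2" by simp
    also have "\<dots> \<le> (G x)\<^sup>2" using h(2)[OF x] by (intro power_mono) auto
    also have "\<dots> \<le> G x * (G x + 1)" using G(2)[OF x] by (simp add: power2_eq_square distrib_left)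
    finally show "(h x)\<^sup>2 / (G x + 1) \<le> G x" using G(2)[OF x] by (simp add: divide_le_eq)
  qed
qed

lemma weighted_energy_parallelogram:
  assumes G: "integrable M G" "\<And>x. x \<in> space M \<Longrightarrow> 0 \<le> G x"
    and h: "h \<in> borel_measurable M" "\<And>x. x \<in> space M \<Longrightarrow> \<bar>h x\<bar> \<le> G x"
    and g: "g \<in> borel_measurable M" "\<And>x. x \<in> space M \<Longrightarrow> \<bar>g x\<bar> \<le> G x"
  shows "weighted_energy M G (\<lambda>x. h x - g x)
           = 2 * weighted_energy M G h + 2 * weighted_energy M G g
             - 4 * weighted_energy M G (\<lambda>x. (h x + g x) / 2)"
proof -
  have [measurable]: "h \<in> borel_measurable M" "g \<in> borel_measurable M" by (fact h(1) g(1))+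
  have mid_bound: "\<bar>(h x + g x) / 2\<bar> \<le> 1 * G x" if "x \<in> space M" for x
    using h(2)[OF that] g(2)[OF that] by (simp add: abs_le_iff)
  have h_bound: "\<bar>h x\<bar> \<le> 1 * G x" and g_bound: "\<bar>g x\<bar> \<le> 1 * G x" if "x \<in> space M" for x
    using h(2)[OF that] g(2)[OF that] by simp_all
  have ih: "integrable M (\<lambda>x. (h x)\<^sup>2 / (G x + 1))"
    by (rule weighted_energy_integrable[OF G h(1) h_bound])
  have ig: "integrable M (\<lambda>x. (g x)\<^sup>2 / (G x + 1))"
    by (rule weighted_energy_integrable[OF G g(1) g_bound])
  have im: "integrable M (\<lambda>x. ((h x + g x) / 2)\<^sup>2 / (G x + 1))"
    by (rule weighted_energy_integrable[OF G _ mid_bound]) measurable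
  have pointwise: "(a - b)\<^sup>2 / w = 2 * (a\<^sup>2 / w) + 2 * (b\<^sup>2 / w) - 4 * (((a + b) / 2)\<^sup>2 / w)"
    for a b w :: real
    by (cases "w = 0") (simp_all add: field_simps power2_eq_square)
  note i2h = integrable_mult_right[OF ih, of 2] and i2g = integrable_mult_right[OF ig, of 2]
    and i4m = integrable_mult_right[OF im, of 4]
  show ?thesis
    unfolding weighted_energy_def pointwise
    by (simp only: Bochner_Integration.integral_diff[OF Bochner_Integration.integrable_add[OF i2h i2g] i4m]
        Bochner_Integration.integral_add[OF i2h i2g] integral_mult_right_zero)
qed

lemma abs_le_amgm:
  fixes a t w :: real
  assumes "t > 0" "w > 0"
  shows "\<bar>a\<bar> \<le> (t * (a\<^sup>2 / w) + w / t) / 2"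
proof -
  have "0 \<le> (t * \<bar>a\<bar> - w)\<^sup>2" by simp
  hence "2 * \<bar>a\<bar> * (t * w) \<le> t\<^sup>2 * a\<^sup>2 + w\<^sup>2"
    by (simp add: power2_eq_square algebra_simps)
  thus ?thesis using assms by (simp add: field_simps power2_eq_square)
qed

lemma integral_abs_le_weighted_energy:
  assumes fin: "finite_measure M"
    and G: "integrable M G" "\<And>x. x \<in> space M \<Longrightarrow> 0 \<le> G x"
    and h: "h \<in> borel_measurable M" "\<And>x. x \<in> space M \<Longrightarrow> \<bar>h x\<bar> \<le> c * G x"
    and t: "t > 0"
  shows "(\<integral>x. \<bar>h x\<bar> \<partial>M) \<le> (t * weighted_energy M G h + (\<integral>x. G x + 1 \<partial>M) / t) / 2"
proof -
  interpret finite_measure M by (rule fin)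
  have [measurable]: "h \<in> borel_measurable M" by (rule h(1))
  have ie: "integrable M (\<lambda>x. (h x)\<^sup>2 / (G x + 1))"
    by (rule weighted_energy_integrable[OF G h])
  have iW: "integrable M (\<lambda>x. G x + 1)" using G(1) by simp
  have i1: "integrable M (\<lambda>x. t * ((h x)\<^sup>2 / (G x + 1)))" by (rule integrable_mult_right[OF ie])
  have i2: "integrable M (\<lambda>x. (G x + 1) / t)" by (rule integrable_divide_zero[OF iW])
  have "(\<integral>x. \<bar>h x\<bar> \<partial>M) \<le> (\<integral>x. (t * ((h x)\<^sup>2 / (G x + 1)) + (G x + 1) / t) / 2 \<partial>M)"
  proof (rule integral_mono)
    show "integrable M (\<lambda>x. \<bar>h x\<bar>)"
      by (rule Bochner_Integration.integrable_bound[where f = "\<lambda>x. c * G x"])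
         (use G(1) h(2) in \<open>auto intro!: AE_I2 intro: order_trans[OF _ abs_ge_self]\<close>)
    show "integrable M (\<lambda>x. (t * ((h x)\<^sup>2 / (G x + 1)) + (G x + 1) / t) / 2)"
      by (intro integrable_divide_zero Bochner_Integration.integrable_add i1 i2)
    show "\<bar>h x\<bar> \<le> (t * ((h x)\<^sup>2 / (G x + 1)) + (G x + 1) / t) / 2" if "x \<in> space M" for x
      using abs_le_amgm[OF t, of "G x + 1" "h x"] G(2)[OF that] by simp
  qed
  also have "\<dots> = (t * weighted_energy M G h + (\<integral>x. G x + 1 \<partial>M) / t) / 2"
    unfolding weighted_energy_def
    by (simp only: integral_divide_zero Bochner_Integration.integral_add[OF i1 i2] integral_mult_right_zero)
  finally show ?thesis .
qed

text \<open>Abstract minimisation: in a decreasing sequence of nonempty midpoint-closed classes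
  on which a bounded nonnegative functional satisfies the parallelogram law, choosing in
  each class an almost minimiser gives a sequence whose differences have small energy.\<close>
lemma midpoint_closed_minimizing_sequence:
  fixes Q :: "('x \<Rightarrow> real) \<Rightarrow> real" and C :: "nat \<Rightarrow> ('x \<Rightarrow> real) set"
  assumes nonempty: "\<And>N. C N \<noteq> {}" and decreasing: "\<And>N. C (Suc N) \<subseteq> C N"
    and midpoint: "\<And>N h g. h \<in> C N \<Longrightarrow> g \<in> C N \<Longrightarrow> (\<lambda>x. (h x + g x) / 2) \<in> C N"
    and nonneg: "\<And>h. h \<in> C 0 \<Longrightarrow> 0 \<le> Q h"
    and bounded: "\<And>h. h \<in> C 0 \<Longrightarrow> Q h \<le> B"
    and parallelogram: "\<And>h g. h \<in> C 0 \<Longrightarrow> g \<in> C 0 \<Longrightarrow>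
           Q (\<lambda>x. h x - g x) = 2 * Q h + 2 * Q g - 4 * Q (\<lambda>x. (h x + g x) / 2)"
  shows "\<exists>hs. (\<forall>N. hs N \<in> C N) \<and> (\<forall>e>0. \<exists>N. \<forall>i\<ge>N. \<forall>j\<ge>N. Q (\<lambda>x. hs i x - hs j x) < e)"
proof -
  have antimono: "C j \<subseteq> C i" if "i \<le> j" for i j
    using lift_Suc_antimono_le[of C, OF decreasing that] .
  define m where "m N = Inf (Q ` C N)" for N
  have bdd: "bdd_below (Q ` C N)" for N
    by (rule bdd_belowI[of _ 0]) (use nonneg antimono in blast)
  have m_le: "m N \<le> Q h" if "h \<in> C N" for h N
    unfolding m_def by (rule cInf_lower) (use that bdd in auto)
  have m_inc: "incseq m"
    unfolding incseq_def m_def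
    by (intro allI impI cInf_superset_mono bdd image_mono antimono) (use nonempty in auto)
  have m_bounded: "m N \<le> B" for N
    using nonempty[of N] m_le bounded antimono[of 0 N] by (meson all_not_in_conv order_trans subsetD le0)
  define D where "D = (SUP N. m N)"
  have m_lim: "m \<longlonglongrightarrow> D"
    unfolding D_def by (rule LIMSEQ_incseq_SUP[OF bdd_aboveI[of _ B] m_inc]) (use m_bounded in auto)
  have m_le_D: "m N \<le> D" for N using incseq_le[OF m_inc m_lim] by simp
  have "\<exists>h. h \<in> C N \<and> Q h < m N + 1 / (real N + 1)" for N
  proof -
    have "Inf (Q ` C N) < m N + 1 / (real N + 1)" unfolding m_def by simp
    then obtain q where "q \<in> Q ` C N" "q < m N + 1 / (real N + 1)"
      using cInf_lessD[of "Q ` C N"] nonempty[of N] by blast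
    thus ?thesis by auto
  qed
  then obtain hs where hs_in: "\<And>N. hs N \<in> C N"
    and hs_almost_min: "\<And>N. Q (hs N) < m N + 1 / (real N + 1)" by metis
  define eps where "eps N = 4 * (D - m N + 1 / (real N + 1))" for N
  have diff_le: "Q (\<lambda>x. hs i x - hs j x) \<le> eps N" if "N \<le> i" "N \<le> j" for N i j
  proof -
    have in_N: "hs i \<in> C N" "hs j \<in> C N" using hs_in antimono that by blast+
    hence "m N \<le> Q (\<lambda>x. (hs i x + hs j x) / 2)" by (intro m_le midpoint)
    moreover have "1 / (real i + 1) \<le> 1 / (real N + 1)" "1 / (real j + 1) \<le> 1 / (real N + 1)"
      using that by (simp_all add: frac_le)
    moreover have "Q (\<lambda>x. hs i x - hs j x)
        = 2 * Q (hs i) + 2 * Q (hs j) - 4 * Q (\<lambda>x. (hs i x + hs j x) / 2)"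
      using in_N antimono[of 0 N] by (intro parallelogram) auto
    ultimately show ?thesis
      using hs_almost_min[of i] hs_almost_min[of j] m_le_D[of i] m_le_D[of j] unfolding eps_def
      by argo
  qed
  have "(\<lambda>N. 1 / (real N + 1)) \<longlonglongrightarrow> 0"
    using LIMSEQ_inverse_real_of_nat by (simp add: inverse_eq_divide add.commute)
  hence "eps \<longlonglongrightarrow> 4 * (D - D + 0)"
    unfolding eps_def by (intro tendsto_intros m_lim)
  hence eps_lim: "eps \<longlonglongrightarrow> 0" by simp
  have "\<exists>N. \<forall>i\<ge>N. \<forall>j\<ge>N. Q (\<lambda>x. hs i x - hs j x) < e" if e: "e > 0" for e
  proof -
    obtain N where "eps N < e" using order_tendstoD(2)[OF eps_lim e] by (auto simp: eventually_sequentially)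
    thus ?thesis using diff_le by (meson le_less_trans)
  qed
  thus ?thesis using hs_in by blast
qed

lemma nested_midpoint_closed_ae_selection:
  fixes M :: "'x measure" and G :: "'x \<Rightarrow> real" and C :: "nat \<Rightarrow> ('x \<Rightarrow> real) set"
  assumes fin: "finite_measure M" and G: "integrable M G"
    and nonempty: "\<And>N. C N \<noteq> {}" and decreasing: "\<And>N. C (Suc N) \<subseteq> C N"
    and midpoint: "\<And>N h g. h \<in> C N \<Longrightarrow> g \<in> C N \<Longrightarrow> (\<lambda>x. (h x + g x) / 2) \<in> C N"
    and measurable: "\<And>N h. h \<in> C N \<Longrightarrow> h \<in> borel_measurable M"
    and dominated: "\<And>N h x. h \<in> C N \<Longrightarrow> x \<in> space M \<Longrightarrow> \<bar>h x\<bar> \<le> G x"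
  shows "\<exists>hs \<phi>. (\<forall>k. hs k \<in> C k) \<and> \<phi> \<in> borel_measurable M \<and>
                (AE x in M. (\<lambda>k. hs k x) \<longlonglongrightarrow> \<phi> x)"
proof -
  have antimono: "C j \<subseteq> C i" if "i \<le> j" for i j
    using lift_Suc_antimono_le[of C, OF decreasing that] .
  have G_nonneg: "0 \<le> G x" if "x \<in> space M" for x
    using nonempty[of 0] dominated[of _ 0 x] that by (auto intro: order_trans[OF abs_ge_zero])
  have energy_nonneg: "0 \<le> weighted_energy M G h" for h
    by (rule weighted_energy_nonneg[OF G_nonneg])
  have energy_bounded: "weighted_energy M G h \<le> integral\<^sup>L M G" if "h \<in> C 0" for h
    using that by (intro weighted_energy_le[OF G G_nonneg measurable dominated])
  have energy_parallelogram: "weighted_energy M G (\<lambda>x. h x - g x)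
      = 2 * weighted_energy M G h + 2 * weighted_energy M G g
        - 4 * weighted_energy M G (\<lambda>x. (h x + g x) / 2)" if "h \<in> C 0" "g \<in> C 0" for h g
    using that by (intro weighted_energy_parallelogram[OF G G_nonneg measurable dominated measurable dominated])
  obtain hs where hs_in: "\<And>N. hs N \<in> C N" and energy_cauchy:
    "\<And>e. e > 0 \<Longrightarrow> \<exists>N. \<forall>i\<ge>N. \<forall>j\<ge>N. weighted_energy M G (\<lambda>x. hs i x - hs j x) < e"
    using midpoint_closed_minimizing_sequence[of C "weighted_energy M G" "integral\<^sup>L M G"]
      nonempty decreasing midpoint energy_nonneg energy_bounded energy_parallelogram by blast
  define IW where "IW = (\<integral>x. G x + 1 \<partial>M)"
  have IW_nonneg: "0 \<le> IW" unfolding IW_def by (intro integral_nonneg_AE AE_I2) (simp add: G_nonneg)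
  have "\<exists>N. \<forall>i\<ge>N. \<forall>j\<ge>N. (\<integral>x. norm (hs i x - hs j x) \<partial>M) < e" if e: "e > 0" for e
  proof -
    define t where "t = 2 * (IW + 1) / e"
    have t: "t > 0" using e IW_nonneg by (simp add: t_def)
    obtain N where N: "\<And>i j. N \<le> i \<Longrightarrow> N \<le> j \<Longrightarrow>
        weighted_energy M G (\<lambda>x. hs i x - hs j x) < e / (2 * t)"
      using energy_cauchy[of "e / (2 * t)"] e t by auto
    have "(\<integral>x. norm (hs i x - hs j x) \<partial>M) < e" if "N \<le> i" "N \<le> j" for i j
    proof -
      have diff_bound: "\<bar>hs i x - hs j x\<bar> \<le> 2 * G x" if "x \<in> space M" for x
        using dominated[OF hs_in[of i] that] dominated[OF hs_in[of j] that] by linarith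
      have "(\<integral>x. \<bar>hs i x - hs j x\<bar> \<partial>M)
          \<le> (t * weighted_energy M G (\<lambda>x. hs i x - hs j x) + IW / t) / 2"
        unfolding IW_def using measurable[OF hs_in] diff_bound
        by (intro integral_abs_le_weighted_energy[OF fin G G_nonneg _ _ t]) auto
      moreover have "t * weighted_energy M G (\<lambda>x. hs i x - hs j x) < e / 2"
        using N[OF that] t by (simp add: field_simps)
      moreover have "IW / t \<le> e / 2" using e IW_nonneg by (simp add: t_def field_simps)
      ultimately show ?thesis unfolding real_norm_def using e by argo
    qed
    thus ?thesis by blast
  qed
  moreover have "integrable M (hs n)" for n
    using measurable[OF hs_in] dominated[OF hs_in] G
    by (intro Bochner_Integration.integrable_bound[OF G])
       (auto intro!: AE_I2 intro: order_trans[OF _ abs_ge_self])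
  ultimately obtain r where r: "strict_mono r" "AE x in M. Cauchy (\<lambda>i. hs (r i) x)"
    using cauchy_L1_AE_cauchy_subseq[of M hs] by blast
  define \<phi> where "\<phi> x = lim (\<lambda>i. hs (r i) x)" for x
  have "\<phi> \<in> borel_measurable M"
    unfolding \<phi>_def by (rule borel_measurable_lim_metric) (use measurable hs_in in auto)
  moreover have "AE x in M. (\<lambda>k. hs (r k) x) \<longlonglongrightarrow> \<phi> x"
    using r(2) by eventually_elim (simp add: \<phi>_def Cauchy_convergent_iff convergent_LIMSEQ_iff)
  moreover have "\<forall>k. hs (r k) \<in> C k" using hs_in antimono seq_suble[OF r(1)] by blast
  ultimately show ?thesis by (intro exI[of _ "\<lambda>k. hs (r k)"] exI[of _ \<phi>]) auto
qed

locale metric_cocycle = prob_space M for M :: "'x measure" +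
  fixes T :: "'x \<Rightarrow> 'x" and d :: "'x \<Rightarrow> nat \<Rightarrow> nat \<Rightarrow> real"
  assumes T_measurable [measurable]: "T \<in> M \<rightarrow>\<^sub>M M"
    and T_preserving: "distr M M T = M"
    and d_refl: "x \<in> space M \<Longrightarrow> d x i i = 0"
    and d_sym: "x \<in> space M \<Longrightarrow> d x i j = d x j i"
    and d_triangle: "x \<in> space M \<Longrightarrow> d x i k \<le> d x i j + d x j k"
    and d_shift: "x \<in> space M \<Longrightarrow> d (T x) i j = d x (Suc i) (Suc j)"
    and d_integrable: "integrable M (\<lambda>x. d x 0 n)"
begin

abbreviation rho :: "nat \<Rightarrow> 'x \<Rightarrow> real" where
  "rho n x \<equiv> d x 0 n"

lemma T_pow_measurable [measurable]: "T ^^ k \<in> M \<rightarrow>\<^sub>M M"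
  by (induction k) (auto simp: measurable_ident_sets)

lemma T_pow_space: "x \<in> space M \<Longrightarrow> (T ^^ k) x \<in> space M"
  using measurable_space[OF T_pow_measurable] .

lemma T_pow_preserving: "distr M M (T ^^ k) = M"
proof (induction k)
  case (Suc k)
  have "distr M M (T ^^ Suc k) = distr (distr M M (T ^^ k)) M T"
    by (simp add: distr_distr)
  also have "\<dots> = M" using Suc T_preserving by simp
  finally show ?case .
qed (simp add: distr_id2 measurable_ident_sets)

lemma integrable_T_pow:
  fixes f :: "'x \<Rightarrow> real"
  assumes "integrable M f" shows "integrable M (\<lambda>x. f ((T ^^ k) x))"
  using integrable_distr_eq[OF T_pow_measurable, of f k] assms T_pow_preserving by auto

lemma integral_T_pow:
  fixes f :: "'x \<Rightarrow> real"
  assumes "integrable M f" shows "(\<integral>x. f ((T ^^ k) x) \<partial>M) = integral\<^sup>L M f"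
  using integral_distr[OF T_pow_measurable, of f k] assms T_pow_preserving by auto

lemma AE_T_pow:
  assumes "AE x in M. P x" shows "AE x in M. P ((T ^^ k) x)"
proof (rule AE_distrD[OF T_pow_measurable])
  show "AE x in distr M M (T ^^ k). P x" unfolding T_pow_preserving by (rule assms)
qed

lemma rho_measurable [measurable]: "rho n \<in> borel_measurable M"
  using d_integrable by auto

lemma rho_nonneg: "x \<in> space M \<Longrightarrow> 0 \<le> rho n x"
  using d_triangle[of x 0 0 n] d_refl[of x 0] d_sym[of x n 0] by linarith

lemma d_shift_pow: "x \<in> space M \<Longrightarrow> d ((T ^^ k) x) i j = d x (i + k) (j + k)"
proof (induction k arbitrary: i j)
  case (Suc k)
  thus ?case using d_shift[OF T_pow_space[OF Suc.prems, of k]] by simp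
qed simp

lemma rho_subadditive:
  "x \<in> space M \<Longrightarrow> rho (n + m) x \<le> rho n x + rho m ((T ^^ n) x)"
  using d_triangle[of x 0 "n + m" n] d_shift_pow[of x n 0 m] by (simp add: add.commute)

text \<open>The mean displacement a(n) = \<integral>\<rho>_n; it is subadditive by invariance of the measure.\<close>
definition growth :: "nat \<Rightarrow> real" where
  "growth n = integral\<^sup>L M (rho n)"

lemma growth_subadditive: "growth (n + m) \<le> growth n + growth m"
proof -
  have "growth (n + m) \<le> (\<integral>x. rho n x + rho m ((T ^^ n) x) \<partial>M)"
    unfolding growth_def
    by (rule integral_mono) (use d_integrable integrable_T_pow[OF d_integrable] rho_subadditive in auto)
  also have "\<dots> = growth n + growth m"
    unfolding growth_def using integral_T_pow[OF d_integrable] d_integrable integrable_T_pow[OF d_integrable]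
    by simp
  finally show ?thesis .
qed

lemma growth_nonneg: "0 \<le> growth n"
  unfolding growth_def by (rule integral_nonneg_AE) (simp add: rho_nonneg)

lemma growth_zero: "growth 0 = 0"
proof -
  have "integral\<^sup>L M (rho 0) = integral\<^sup>L M (\<lambda>_. 0)"
    by (rule Bochner_Integration.integral_cong) (simp_all add: d_refl)
  thus ?thesis unfolding growth_def by simp
qed

text \<open>The drift A = lim a(n)/n = inf a(n)/n, which exists by Fekete's lemma.\<close>
definition drift :: real where
  "drift = Inf ((\<lambda>n. growth n / real n) ` {1..})"

lemma growth_tendsto_drift: "(\<lambda>n. growth n / real n) \<longlonglongrightarrow> drift"
  and drift_le_growth: "n \<ge> 1 \<Longrightarrow> drift \<le> growth n / real n"
  unfolding drift_def using fekete_subadditive[OF growth_subadditive growth_nonneg] by auto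

definition approximant :: "nat \<Rightarrow> 'x \<Rightarrow> real" where
  "approximant N x = (\<Sum>j<Suc N. rho (j + 1) x - rho j (T x)) / real (Suc N)"

lemma approximant_measurable [measurable]: "approximant N \<in> borel_measurable M"
  unfolding approximant_def by measurable

lemma approximant_bound:
  assumes x: "x \<in> space M" shows "\<bar>approximant N x\<bar> \<le> rho 1 x"
proof -
  have increment: "\<bar>rho (j + 1) x - rho j (T x)\<bar> \<le> rho 1 x" for j
  proof -
    have "rho j (T x) = d x 1 (j + 1)" using d_shift[OF x, of 0 j] by simp
    moreover have "d x 0 (j + 1) \<le> d x 0 1 + d x 1 (j + 1)" by (rule d_triangle[OF x])
    moreover have "d x 1 (j + 1) \<le> d x 1 0 + d x 0 (j + 1)" by (rule d_triangle[OF x])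
    ultimately show ?thesis using d_sym[OF x, of 1 0] by linarith
  qed
  have "\<bar>\<Sum>j<Suc N. rho (j + 1) x - rho j (T x)\<bar> \<le> (\<Sum>j<Suc N. rho 1 x)"
    by (rule order_trans[OF sum_abs sum_mono]) (rule increment)
  thus ?thesis unfolding approximant_def by (simp add: field_simps)
qed

lemma approximant_integral: "integral\<^sup>L M (approximant N) = growth (Suc N) / real (Suc N)"
proof -
  have shifted: "integrable M (\<lambda>x. rho j (T x))" "(\<integral>x. rho j (T x) \<partial>M) = growth j" for j
    using integrable_T_pow[OF d_integrable, of 1 j] integral_T_pow[OF d_integrable, of 1 j]
    by (simp_all add: growth_def)
  have "(\<integral>x. (\<Sum>j<Suc N. rho (j + 1) x - rho j (T x)) \<partial>M)
      = (\<Sum>j<Suc N. (\<integral>x. rho (j + 1) x - rho j (T x) \<partial>M))"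
    by (rule Bochner_Integration.integral_sum) (use d_integrable shifted in auto)
  also have "\<dots> = (\<Sum>j<Suc N. growth (Suc j) - growth j)"
    using d_integrable shifted by (simp add: growth_def)
  also have "\<dots> = growth (Suc N)" by (simp add: sum_lessThan_telescope growth_zero)
  finally show ?thesis unfolding approximant_def by simp
qed

text \<open>The Birkhoff sums of the approximant are the telescoping double sums bounded above.\<close>
lemma approximant_birkhoff_bound:
  assumes x: "x \<in> space M"
  shows "(\<Sum>k<n. approximant N ((T ^^ k) x))
           \<le> rho n x + 2 / real (Suc N) * (\<Sum>j<n. rho (j + 1) x)"
proof -
  define P where "P = Suc N"
  have shifted: "approximant N ((T ^^ k) x)
      = (\<Sum>j<P. d x k (k + j + 1) - d x (k + 1) (k + j + 1)) / real P" for k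
  proof -
    have "rho (j + 1) ((T ^^ k) x) = d x k (k + j + 1)" for j
      using d_shift_pow[OF x, of k 0 "j + 1"] by (simp add: algebra_simps)
    moreover have "rho j (T ((T ^^ k) x)) = d x (k + 1) (k + j + 1)" for j
      using d_shift_pow[OF x, of "Suc k" 0 j] by (simp add: algebra_simps)
    ultimately show ?thesis unfolding approximant_def P_def by simp
  qed
  have "(\<Sum>k<n. approximant N ((T ^^ k) x))
      = (\<Sum>k<n. \<Sum>j<P. d x k (k + j + 1) - d x (k + 1) (k + j + 1)) / real P"
    by (simp add: shifted sum_divide_distrib)
  also have "\<dots> \<le> (real P * d x 0 n + 2 * (\<Sum>j<n. d x 0 (j + 1))) / real P"
    by (intro divide_right_mono pseudometric_telescoping_bound d_refl[OF x] d_sym[OF x] d_triangle[OF x])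
       simp
  also have "\<dots> = rho n x + 2 / real (Suc N) * (\<Sum>j<n. rho (j + 1) x)"
    by (simp add: P_def field_simps)
  finally show ?thesis .
qed

definition admissible :: "nat \<Rightarrow> ('x \<Rightarrow> real) set" where
  "admissible N = {h. h \<in> borel_measurable M \<and> (\<forall>x\<in>space M. \<bar>h x\<bar> \<le> rho 1 x) \<and>
      drift \<le> integral\<^sup>L M h \<and>
      (\<forall>n. \<forall>x\<in>space M. (\<Sum>k<n. h ((T ^^ k) x)) \<le> rho n x + 2 / real (Suc N) * (\<Sum>j<n. rho (j + 1) x))}"

lemma admissible_integrable: "h \<in> admissible N \<Longrightarrow> integrable M h"
  unfolding admissible_def
  by (rule Bochner_Integration.integrable_bound[OF d_integrable[of 1]])
     (auto intro!: AE_I2 intro: order_trans[OF _ abs_ge_self])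

lemma approximant_admissible: "approximant N \<in> admissible N"
  unfolding admissible_def
  using approximant_bound approximant_birkhoff_bound approximant_integral drift_le_growth[of "Suc N"]
  by auto

lemma admissible_decreasing: "admissible (Suc N) \<subseteq> admissible N"
proof
  fix h assume h: "h \<in> admissible (Suc N)"
  have "(\<Sum>k<n. h ((T ^^ k) x)) \<le> rho n x + 2 / real (Suc N) * (\<Sum>j<n. rho (j + 1) x)"
    if x: "x \<in> space M" for n x
  proof -
    have "2 / real (Suc (Suc N)) * (\<Sum>j<n. rho (j + 1) x) \<le> 2 / real (Suc N) * (\<Sum>j<n. rho (j + 1) x)"
      by (intro mult_right_mono sum_nonneg rho_nonneg[OF x]) (simp add: frac_le)
    moreover have "(\<Sum>k<n. h ((T ^^ k) x)) \<le> rho n x + 2 / real (Suc (Suc N)) * (\<Sum>j<n. rho (j + 1) x)"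
      using h x unfolding admissible_def by blast
    ultimately show ?thesis by linarith
  qed
  with h show "h \<in> admissible N" unfolding admissible_def by blast
qed

lemma admissible_midpoint:
  assumes h: "h \<in> admissible N" and g: "g \<in> admissible N"
  shows "(\<lambda>x. (h x + g x) / 2) \<in> admissible N"
proof -
  have hi: "integrable M h" "integrable M g" using admissible_integrable h g by auto
  hence [measurable]: "h \<in> borel_measurable M" "g \<in> borel_measurable M" by auto
  have "integral\<^sup>L M (\<lambda>x. (h x + g x) / 2) = (integral\<^sup>L M h + integral\<^sup>L M g) / 2"
    using hi by simp
  hence "drift \<le> integral\<^sup>L M (\<lambda>x. (h x + g x) / 2)"
    using h g unfolding admissible_def by auto
  moreover have "\<bar>(h x + g x) / 2\<bar> \<le> rho 1 x" if "x \<in> space M" for x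
  proof -
    have "\<bar>h x\<bar> \<le> rho 1 x" "\<bar>g x\<bar> \<le> rho 1 x" using h g that unfolding admissible_def by auto
    thus ?thesis by (simp add: abs_le_iff)
  qed
  moreover have "(\<Sum>k<n. (h ((T ^^ k) x) + g ((T ^^ k) x)) / 2)
      \<le> rho n x + 2 / real (Suc N) * (\<Sum>j<n. rho (j + 1) x)" if "x \<in> space M" for n x
  proof -
    have "(\<Sum>k<n. (h ((T ^^ k) x) + g ((T ^^ k) x)) / 2)
        = ((\<Sum>k<n. h ((T ^^ k) x)) + (\<Sum>k<n. g ((T ^^ k) x))) / 2"
      by (simp only: sum_divide_distrib[symmetric] sum.distrib)
    moreover have "(\<Sum>k<n. h ((T ^^ k) x)) \<le> rho n x + 2 / real (Suc N) * (\<Sum>j<n. rho (j + 1) x)"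
      "(\<Sum>k<n. g ((T ^^ k) x)) \<le> rho n x + 2 / real (Suc N) * (\<Sum>j<n. rho (j + 1) x)"
      using h g that unfolding admissible_def by blast+
    ultimately show ?thesis by argo
  qed
  ultimately show ?thesis unfolding admissible_def by auto
qed

lemma admissible_limit_birkhoff_bound:
  assumes admissible: "\<And>k. hs k \<in> admissible k"
    and limit: "AE x in M. (\<lambda>k. hs k x) \<longlonglongrightarrow> \<phi> x"
  shows "AE x in M. \<forall>n. (\<Sum>i<n. \<phi> ((T ^^ i) x)) \<le> rho n x"
proof -
  have "AE x in M. \<forall>i. (\<lambda>k. hs k ((T ^^ i) x)) \<longlonglongrightarrow> \<phi> ((T ^^ i) x)"
    unfolding AE_all_countable by (intro allI AE_T_pow limit)
  with AE_space show ?thesis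
  proof eventually_elim
    case (elim x)
    show ?case
    proof
      fix n
      have "(\<lambda>k. \<Sum>i<n. hs k ((T ^^ i) x)) \<longlonglongrightarrow> (\<Sum>i<n. \<phi> ((T ^^ i) x))"
        by (intro tendsto_sum) (use elim in auto)
      moreover have "(\<lambda>k. rho n x + 2 * inverse (real (Suc k)) * (\<Sum>j<n. rho (j + 1) x))
          \<longlonglongrightarrow> rho n x + 2 * 0 * (\<Sum>j<n. rho (j + 1) x)"
        by (intro tendsto_intros LIMSEQ_inverse_real_of_nat)
      moreover have "(\<Sum>i<n. hs k ((T ^^ i) x))
          \<le> rho n x + 2 * inverse (real (Suc k)) * (\<Sum>j<n. rho (j + 1) x)" for k
        using admissible[of k] elim(1) unfolding admissible_def by (simp add: divide_inverse)
      ultimately show "(\<Sum>i<n. \<phi> ((T ^^ i) x)) \<le> rho n x"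
        using LIMSEQ_le by fastforce
    qed
  qed
qed

lemma integral_le_drift:
  assumes integrable: "integrable M \<phi>"
    and minorant: "AE x in M. \<forall>n. (\<Sum>i<n. \<phi> ((T ^^ i) x)) \<le> rho n x"
  shows "integral\<^sup>L M \<phi> \<le> drift"
proof (rule LIMSEQ_le_const[OF growth_tendsto_drift], intro exI allI impI)
  fix n :: nat assume n: "1 \<le> n"
  have "real n * integral\<^sup>L M \<phi> = (\<integral>x. (\<Sum>i<n. \<phi> ((T ^^ i) x)) \<partial>M)"
    using integral_T_pow[OF integrable] integrable_T_pow[OF integrable] by simp
  also have "\<dots> \<le> growth n"
    unfolding growth_def
    by (rule integral_mono_AE) (use integrable_T_pow[OF integrable] d_integrable minorant in auto)
  finally show "integral\<^sup>L M \<phi> \<le> growth n / real n"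
    using n by (simp add: pos_le_divide_eq mult.commute)
qed

theorem birkhoff_minorant:
  "\<exists>\<phi>. integrable M \<phi> \<and> integral\<^sup>L M \<phi> = drift \<and>
       (AE x in M. \<forall>n. (\<Sum>i<n. \<phi> ((T ^^ i) x)) \<le> rho n x)"
proof -
  have "\<exists>hs \<phi>. (\<forall>k. hs k \<in> admissible k) \<and> \<phi> \<in> borel_measurable M \<and>
      (AE x in M. (\<lambda>k. hs k x) \<longlonglongrightarrow> \<phi> x)"
  proof (rule nested_midpoint_closed_ae_selection[OF finite_measure_axioms d_integrable[of 1]])
    show "admissible N \<noteq> {}" for N using approximant_admissible by blast
  qed (use admissible_decreasing admissible_midpoint in \<open>auto simp: admissible_def\<close>)
  then obtain hs \<phi> where admissible: "\<And>k. hs k \<in> admissible k"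
    and \<phi>_measurable: "\<phi> \<in> borel_measurable M" and limit: "AE x in M. (\<lambda>k. hs k x) \<longlonglongrightarrow> \<phi> x"
    by blast
  have hs_measurable: "hs k \<in> borel_measurable M" for k
    using admissible[of k] unfolding admissible_def by auto
  have dominated: "AE x in M. norm (hs k x) \<le> rho 1 x" for k
    using admissible[of k] unfolding admissible_def by (auto intro!: AE_I2)
  have integrable: "integrable M \<phi>"
    by (rule integrable_dominated_convergence[OF \<phi>_measurable hs_measurable d_integrable limit dominated])
  have "(\<lambda>k. integral\<^sup>L M (hs k)) \<longlonglongrightarrow> integral\<^sup>L M \<phi>"
    by (rule integral_dominated_convergence[OF \<phi>_measurable hs_measurable d_integrable limit dominated])
  hence "drift \<le> integral\<^sup>L M \<phi>"
    by (rule LIMSEQ_le_const) (use admissible in \<open>auto simp: admissible_def\<close>)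
  moreover have minorant: "AE x in M. \<forall>n. (\<Sum>i<n. \<phi> ((T ^^ i) x)) \<le> rho n x"
    by (rule admissible_limit_birkhoff_bound[OF admissible limit])
  ultimately show ?thesis using integral_le_drift[OF integrable minorant] integrable by auto
qed

theorem subadditive_decomposition:
  "\<exists>\<phi> r. integrable M \<phi> \<and> integral\<^sup>L M \<phi> = drift \<and>
     (\<forall>n. r n \<in> borel_measurable M \<and> (\<forall>x\<in>space M. 0 \<le> r n x)) \<and>
     (AE x in M. \<forall>n. rho n x = (\<Sum>k<n. \<phi> ((T ^^ k) x)) + r n x) \<and>
     (\<forall>n m. \<forall>x\<in>space M. r (n + m) x \<le> r n x + r m ((T ^^ n) x)) \<and>
     (\<lambda>n. integral\<^sup>L M (r n) / real n) \<longlonglongrightarrow> 0"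
proof -
  obtain \<phi> where integrable: "integrable M \<phi>" and integral: "integral\<^sup>L M \<phi> = drift"
    and minorant: "AE x in M. \<forall>n. (\<Sum>i<n. \<phi> ((T ^^ i) x)) \<le> rho n x"
    using birkhoff_minorant by blast
  define S where "S n x = (\<Sum>k<n. \<phi> ((T ^^ k) x))" for n x
  define r where "r n x = max 0 (rho n x - S n x)" for n x
  have [measurable]: "\<phi> \<in> borel_measurable M" using integrable by auto
  have S_integrable: "integrable M (S n)" for n
    unfolding S_def using integrable_T_pow[OF integrable] by auto
  have S_integral: "integral\<^sup>L M (S n) = real n * drift" for n
    unfolding S_def using integrable_T_pow[OF integrable] integral_T_pow[OF integrable] integral by simp
  have r_measurable [measurable]: "r n \<in> borel_measurable M" for n
    unfolding r_def S_def by measurable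
  have decomposition: "AE x in M. \<forall>n. rho n x = S n x + r n x"
    using minorant by eventually_elim (auto simp: r_def S_def)
  have "r (n + m) x \<le> r n x + r m ((T ^^ n) x)" if x: "x \<in> space M" for n m x
    using rho_subadditive[OF x, of n m] unfolding r_def S_def birkhoff_sum_add by simp
  moreover have r_integral: "integral\<^sup>L M (r n) = growth n - real n * drift" for n
  proof -
    have "integral\<^sup>L M (r n) = integral\<^sup>L M (\<lambda>x. rho n x - S n x)"
      by (rule integral_cong_AE) (use decomposition S_integrable in \<open>auto elim!: AE_mp\<close>)
    thus ?thesis using d_integrable S_integrable S_integral by (simp add: growth_def)
  qed
  moreover have "(\<lambda>n. integral\<^sup>L M (r n) / real n) \<longlonglongrightarrow> 0"
  proof -
    have "(\<lambda>n. growth n / real n - drift) \<longlonglongrightarrow> drift - drift"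
      by (intro tendsto_intros growth_tendsto_drift)
    moreover have "\<forall>\<^sub>F n in sequentially. growth n / real n - drift = integral\<^sup>L M (r n) / real n"
      using eventually_ge_at_top[of 1] by eventually_elim (simp add: r_integral diff_divide_distrib)
    ultimately show ?thesis by (simp add: tendsto_cong)
  qed
  ultimately show ?thesis
    using integrable integral decomposition r_measurable unfolding S_def
    by (intro exI[of _ \<phi>] exI[of _ r]) (auto simp: r_def)
qed

end

lemma invertible_mpt_distr: "invertible_mpt M T \<Longrightarrow> distr M M T = M"
  unfolding invertible_mpt_def by (intro measure_eqI) (auto simp: emeasure_distr)

text \<open>The norms \<parallel>s_x(i,j)\<parallel> of an additive, isometrically equivariant family form a metric
  cocycle: additivity gives the pseudometric axioms and equivariance with k = 1 the shift.\<close>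
lemma norm_cocycle_metric_cocycle:
  fixes M :: "'x measure" and T :: "'x \<Rightarrow> 'x"
    and c :: "int \<Rightarrow> 'x \<Rightarrow> 'b::real_normed_vector \<Rightarrow> 'b" and s :: "'x \<Rightarrow> int \<Rightarrow> int \<Rightarrow> 'b"
  assumes prob: "prob_space M" and mpt: "invertible_mpt M T"
    and c_isom: "\<And>n x. x \<in> space M \<Longrightarrow> lin_isometry (c n x)"
    and s_add: "\<And>x m l n. x \<in> space M \<Longrightarrow> s x m l + s x l n = s x m n"
    and s_equiv: "\<And>x k m n. x \<in> space M \<Longrightarrow> c k x (s (Tpow M T k x) m n) = s x (m + k) (n + k)"
    and s_int: "\<And>n. integrable M (\<lambda>x. norm (s x 0 n))"
  shows "metric_cocycle M T (\<lambda>x i j. norm (s x (int i) (int j)))"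
proof (intro metric_cocycle.intro metric_cocycle_axioms.intro prob)
  show "T \<in> M \<rightarrow>\<^sub>M M" using mpt unfolding invertible_mpt_def by auto
  show "distr M M T = M" by (rule invertible_mpt_distr[OF mpt])
  fix x i j k assume x: "x \<in> space M"
  have s_zero: "s x m m = 0" for m using s_add[OF x, of m m m] by simp
  show "norm (s x (int i) (int i)) = 0" by (simp add: s_zero)
  have "s x (int i) (int j) = - s x (int j) (int i)"
    using s_add[OF x, of "int i" "int j" "int i"] s_zero by (simp add: eq_neg_iff_add_eq_0)
  thus "norm (s x (int i) (int j)) = norm (s x (int j) (int i))" by simp
  show "norm (s x (int i) (int k)) \<le> norm (s x (int i) (int j)) + norm (s x (int j) (int k))"
    using s_add[OF x, of "int i" "int j" "int k"] norm_triangle_ineq by metis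
  have "s x (int (Suc i)) (int (Suc j)) = c 1 x (s (T x) (int i) (int j))"
    using s_equiv[OF x, of 1 "int i" "int j"] by (simp add: Tpow_def add.commute)
  thus "norm (s (T x) (int i) (int j)) = norm (s x (int (Suc i)) (int (Suc j)))"
    using c_isom[OF x, of 1] unfolding lin_isometry_def by simp
next
  show "integrable M (\<lambda>x. norm (s x (int 0) (int n)))" for n using s_int by simp
qed

theorem mainTheorem9:
  fixes M :: "'x measure" and T :: "'x \<Rightarrow> 'x"
    and c :: "int \<Rightarrow> 'x \<Rightarrow> 'b::banach \<Rightarrow> 'b"
    and s :: "'x \<Rightarrow> int \<Rightarrow> int \<Rightarrow> 'b"
  assumes std: "standard_prob_space M"
    and mpt: "invertible_mpt M T"
    and erg: "ergodic M T"
    and sep: "separable_banach TYPE('b)"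
    and refl: "reflexive_banach TYPE('b)"
    and c_isom: "\<And>n x. x \<in> space M \<Longrightarrow> lin_isometry (c n x)"
    and c_cocycle: "\<And>n m x. x \<in> space M \<Longrightarrow> c (n + m) x = c n x \<circ> c m (Tpow M T n x)"
    and c_meas: "\<And>n b. (\<lambda>x. c n x b) \<in> borel_measurable M"
    and s_add: "\<And>x m l n. x \<in> space M \<Longrightarrow> s x m l + s x l n = s x m n"
    and s_equiv: "\<And>x k m n. x \<in> space M \<Longrightarrow> c k x (s (Tpow M T k x) m n) = s x (m + k) (n + k)"
    and s_weak_meas: "\<And>m n (f :: 'b \<Rightarrow>\<^sub>L real). (\<lambda>x. blinfun_apply f (s x m n)) \<in> borel_measurable M"
    and s_int: "\<And>n. integrable M (\<lambda>x. norm (s x 0 n))"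
  shows "\<exists>(\<phi> :: 'x \<Rightarrow> real) (r :: nat \<Rightarrow> 'x \<Rightarrow> real).
           integrable M \<phi> \<and>
           integral\<^sup>L M \<phi> = lim (\<lambda>n. (\<integral>x. norm (s x 0 (int n)) \<partial>M) / real n) \<and>
           (\<forall>n\<ge>1. r n \<in> borel_measurable M \<and> (\<forall>x\<in>space M. 0 \<le> r n x)) \<and>
           (AE x in M. (\<forall>n\<ge>1. norm (s x 0 (int n)) = (\<Sum>k<n. \<phi> ((T ^^ k) x)) + r n x) \<and>
                       (\<forall>n\<ge>1. \<forall>m\<ge>1. r (n + m) x \<le> r n x + r m ((T ^^ n) x))) \<and>
           (\<lambda>n. (\<integral>x. r n x \<partial>M) / real n) \<longlonglongrightarrow> 0"
proof -
  have prob: "prob_space M" using std unfolding standard_prob_space_def by simp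
  interpret metric_cocycle M T "\<lambda>x i j. norm (s x (int i) (int j))"
    by (rule norm_cocycle_metric_cocycle[OF prob mpt c_isom s_add s_equiv s_int])
  have "lim (\<lambda>n. (\<integral>x. norm (s x 0 (int n)) \<partial>M) / real n) = drift"
    using growth_tendsto_drift unfolding growth_def by (simp add: limI)
  moreover obtain \<phi> r where "integrable M \<phi>" "integral\<^sup>L M \<phi> = drift"
    "\<forall>n. r n \<in> borel_measurable M \<and> (\<forall>x\<in>space M. 0 \<le> r n x)"
    "AE x in M. \<forall>n. norm (s x 0 (int n)) = (\<Sum>k<n. \<phi> ((T ^^ k) x)) + r n x"
    "\<forall>n m. \<forall>x\<in>space M. r (n + m) x \<le> r n x + r m ((T ^^ n) x)"
    "(\<lambda>n. integral\<^sup>L M (r n) / real n) \<longlonglongrightarrow> 0"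
    using subadditive_decomposition by auto
  moreover note AE_space
  ultimately show ?thesis
    by (intro exI[of _ \<phi>] exI[of _ r] conjI) (auto elim!: AE_mp)
qed

end
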